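(* Let $K$ be a field, $\mathcal A$ a $K$-algebra, $\vartheta$ any one of the four types (left, right, pre-two-sided, two-sided), and $0\neq a\in\mathcal A$. Then the one-dimensional subspace $Ka$ is a $\vartheta$-Mathieu subspace of $\mathcal A$ if and only if one of the following holds: (1) $Ka$ is a $\vartheta$-ideal of $\mathcal A$, equivalently $Ka=(a)_\vartheta$; (2) $a$ is not a quasi-idempotent of $\mathcal A$.
   Context: All algebras are associative and unital. $a$ is a quasi-idempotent if $a^2=ra$ for some $r\in K^\times$. A $\vartheta$-ideal is a left ideal if $\vartheta$ = left, right ideal if $\vartheta$ = right, two-sided ideal if $\vartheta$ is pre-two-sided or two-sided. $(x)_\vartheta$ is $\mathcal Ax$ if $\vartheta$ = left, $x\mathcal A$ if right, the two-sided ideal generated by $x$ if two-sided, and $x\mathcal A+\mathcal Ax$ if pre-two-sided. A $K$-subspace $V$ is a left (resp. right) Mathieu subspace if whenever $b\in\mathcal A$ satisfies $b^m\in V$ for all $m\ge1$, then for every $c\in\mathcal A$, $cb^m\in V$ (resp. $b^mc\in V$) for all sufficiently large $m$; pre-two-sided if both left and right; two-sided if whenever $b^m\in V$ for all $m\ge1$, then for all $c,d\in\mathcal A$, $cb^md\in V$ for all sufficiently large $m$. *)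

theory Defs
  imports Main "HOL.Vector_Spaces"
begin

definition is_algebra :: "('k::field \<Rightarrow> 'a::ring_1 \<Rightarrow> 'a) \<Rightarrow> bool" where
  "is_algebra smul \<longleftrightarrow> Vector_Spaces.vector_space smul \<and>
     (\<forall>c x y. smul c (x * y) = smul c x * y \<and> smul c (x * y) = x * smul c y)"

datatype mtype = Left | Right | PreTwoSided | TwoSided

definition line :: "('k::field \<Rightarrow> 'a::ring_1 \<Rightarrow> 'a) \<Rightarrow> 'a \<Rightarrow> 'a set" where
  "line smul a = range (\<lambda>c. smul c a)"

definition quasi_idempotent :: "('k::field \<Rightarrow> 'a::ring_1 \<Rightarrow> 'a) \<Rightarrow> 'a \<Rightarrow> bool" where
  "quasi_idempotent smul a \<longleftrightarrow> (\<exists>r. r \<noteq> 0 \<and> a * a = smul r a)"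

definition left_mathieu :: "('k::field \<Rightarrow> 'a::ring_1 \<Rightarrow> 'a) \<Rightarrow> 'a set \<Rightarrow> bool" where
  "left_mathieu smul V \<longleftrightarrow> Modules.module.subspace smul V \<and>
     (\<forall>b. (\<forall>m\<ge>1. b ^ m \<in> V) \<longrightarrow> (\<forall>c. \<exists>N. \<forall>m\<ge>N. c * b ^ m \<in> V))"

definition right_mathieu :: "('k::field \<Rightarrow> 'a::ring_1 \<Rightarrow> 'a) \<Rightarrow> 'a set \<Rightarrow> bool" where
  "right_mathieu smul V \<longleftrightarrow> Modules.module.subspace smul V \<and>
     (\<forall>b. (\<forall>m\<ge>1. b ^ m \<in> V) \<longrightarrow> (\<forall>c. \<exists>N. \<forall>m\<ge>N. b ^ m * c \<in> V))"

definition two_sided_mathieu :: "('k::field \<Rightarrow> 'a::ring_1 \<Rightarrow> 'a) \<Rightarrow> 'a set \<Rightarrow> bool" where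
  "two_sided_mathieu smul V \<longleftrightarrow> Modules.module.subspace smul V \<and>
     (\<forall>b. (\<forall>m\<ge>1. b ^ m \<in> V) \<longrightarrow> (\<forall>c d. \<exists>N. \<forall>m\<ge>N. c * b ^ m * d \<in> V))"

fun mathieu :: "mtype \<Rightarrow> ('k::field \<Rightarrow> 'a::ring_1 \<Rightarrow> 'a) \<Rightarrow> 'a set \<Rightarrow> bool" where
  "mathieu Left smul V = left_mathieu smul V"
| "mathieu Right smul V = right_mathieu smul V"
| "mathieu PreTwoSided smul V = (left_mathieu smul V \<and> right_mathieu smul V)"
| "mathieu TwoSided smul V = two_sided_mathieu smul V"

text \<open>theta-ideals: K-subspaces closed under left / right / both multiplications
(pre-two-sided and two-sided both mean two-sided ideal).\<close>
fun ideal :: "mtype \<Rightarrow> ('k::field \<Rightarrow> 'a::ring_1 \<Rightarrow> 'a) \<Rightarrow> 'a set \<Rightarrow> bool" where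
  "ideal Left smul I = (Modules.module.subspace smul I \<and> (\<forall>x\<in>I. \<forall>c. c * x \<in> I))"
| "ideal Right smul I = (Modules.module.subspace smul I \<and> (\<forall>x\<in>I. \<forall>c. x * c \<in> I))"
| "ideal PreTwoSided smul I =
     (Modules.module.subspace smul I \<and> (\<forall>x\<in>I. \<forall>c. c * x \<in> I \<and> x * c \<in> I))"
| "ideal TwoSided smul I =
     (Modules.module.subspace smul I \<and> (\<forall>x\<in>I. \<forall>c. c * x \<in> I \<and> x * c \<in> I))"

fun gen :: "mtype \<Rightarrow> ('k::field \<Rightarrow> 'a::ring_1 \<Rightarrow> 'a) \<Rightarrow> 'a \<Rightarrow> 'a set" where
  "gen Left smul x = {c * x | c. True}"
| "gen Right smul x = {x * c | c. True}"
| "gen PreTwoSided smul x = {x * c + d * x | c d. True}"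
| "gen TwoSided smul x = \<Inter>{I. ideal TwoSided smul I \<and> x \<in> I}"

end

theory Submission
  imports Defs
begin

text \<open>If \<open>a\<close> is not quasi-idempotent, any \<open>b \<in> K a\<close> with \<open>b\<^sup>2 \<in> K a\<close> satisfies
\<open>b\<^sup>2 = 0\<close>; so every \<open>b\<close> whose powers stay in \<open>K a\<close> is nilpotent and the Mathieu
conditions hold trivially. If \<open>a\<^sup>2 = r a\<close> with \<open>r \<noteq> 0\<close>, then \<open>e = a / r\<close> is an
idempotent with \<open>e\<^sup>m = e \<in> K a\<close> for all \<open>m \<ge> 1\<close>, and the Mathieu conditions
applied to \<open>b = e\<close> say exactly that \<open>K a\<close> absorbs multiplication by arbitrary
elements, i.e.\ is an ideal.\<close>

lemma power_idempotent:
  fixes e :: "'a::monoid_mult"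
  assumes "e * e = e" and "m \<ge> 1"
  shows "e ^ m = e"
proof -
  have "e ^ Suc n = e" for n
    by (induction n) (simp_all add: assms(1))
  with \<open>m \<ge> 1\<close> show ?thesis
    by (cases m) simp_all
qed

lemma power_eq_zero_if_square_eq_zero:
  fixes b :: "'a::{monoid_mult,mult_zero}"
  assumes "b * b = 0" and "m \<ge> 2"
  shows "b ^ m = 0"
proof -
  obtain k where "m = k + 2"
    using \<open>m \<ge> 2\<close> by (metis le_add_diff_inverse2)
  then show ?thesis
    using assms(1) by (simp add: mult.assoc[symmetric])
qed

locale k_algebra =
  fixes smul :: "'k::field \<Rightarrow> 'a::ring_1 \<Rightarrow> 'a"
  assumes is_algebra: "is_algebra smul"
begin

sublocale vector_space smul
  using is_algebra unfolding is_algebra_def by blast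

lemma scale_mult_left: "smul c (x * y) = smul c x * y"
  and scale_mult_right: "smul c (x * y) = x * smul c y"
  using is_algebra unfolding is_algebra_def by blast+

lemma scale_mult_scale: "smul s x * smul t y = smul (s * t) (x * y)"
  by (metis scale_mult_left scale_mult_right scale_scale)

lemma mathieu_if_ideal:
  assumes "ideal \<theta> smul V"
  shows "mathieu \<theta> smul V"
proof (cases \<theta>)
  case TwoSided
  have "two_sided_mathieu smul V"
    unfolding two_sided_mathieu_def
  proof (intro conjI allI impI)
    show "subspace V"
      using assms TwoSided by simp
    fix b c d assume powers: "\<forall>m\<ge>1. b ^ m \<in> V"
    have "c * b ^ m * d \<in> V" if "m \<ge> 1" for m
      using assms TwoSided powers that by auto
    then show "\<exists>N. \<forall>m\<ge>N. c * b ^ m * d \<in> V"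
      by blast
  qed
  then show ?thesis
    using TwoSided by simp
qed (use assms in \<open>auto simp: left_mathieu_def right_mathieu_def\<close>)

lemma mathieu_if_powers_nilpotent:
  assumes "subspace V"
    and nil: "\<And>b. \<forall>m\<ge>1. b ^ m \<in> V \<Longrightarrow> b * b = 0"
  shows "mathieu \<theta> smul V"
proof -
  have tail_in: "\<exists>N. \<forall>m\<ge>N. c * b ^ m * d \<in> V" if "\<forall>m\<ge>1. b ^ m \<in> V" for b c d
  proof (intro exI allI impI)
    fix m :: nat assume "m \<ge> 2"
    then show "c * b ^ m * d \<in> V"
      using power_eq_zero_if_square_eq_zero[OF nil[OF that]] subspace_0[OF \<open>subspace V\<close>]
      by simp
  qed
  have "left_mathieu smul V" "right_mathieu smul V" "two_sided_mathieu smul V"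
    unfolding left_mathieu_def right_mathieu_def two_sided_mathieu_def
    using \<open>subspace V\<close> tail_in tail_in[of _ _ 1] tail_in[of _ 1] by auto
  then show ?thesis
    by (cases \<theta>) simp_all
qed

lemma mathieu_absorbs_idempotent:
  assumes "mathieu \<theta> smul V" and "e \<in> V" and "e * e = e"
  shows "\<theta> \<noteq> Right \<Longrightarrow> c * e \<in> V"
    and "\<theta> \<noteq> Left \<Longrightarrow> e * c \<in> V"
proof -
  have pow: "e ^ m = e" if "m \<ge> 1" for m
    using power_idempotent[OF \<open>e * e = e\<close> that] .
  then have powers: "\<forall>m\<ge>1. e ^ m \<in> V"
    using \<open>e \<in> V\<close> by simp
  have from_tail: "P e" if "\<exists>N. \<forall>m\<ge>N. P (e ^ m)" for P
    using that pow by (metis le_add1 le_add2)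
  have left: "c * e \<in> V" if "left_mathieu smul V" for c
    using that powers from_tail[of "\<lambda>x. c * x \<in> V"] unfolding left_mathieu_def by blast
  have right: "e * c \<in> V" if "right_mathieu smul V" for c
    using that powers from_tail[of "\<lambda>x. x * c \<in> V"] unfolding right_mathieu_def by blast
  have two_sided: "c * e * d \<in> V" if "two_sided_mathieu smul V" for c d
    using that powers from_tail[of "\<lambda>x. c * x * d \<in> V"] unfolding two_sided_mathieu_def by blast
  show "\<theta> \<noteq> Right \<Longrightarrow> c * e \<in> V"
    using assms(1) left two_sided[of c 1] by (cases \<theta>) simp_all
  show "\<theta> \<noteq> Left \<Longrightarrow> e * c \<in> V"
    using assms(1) right two_sided[of 1 c] by (cases \<theta>) simp_all
qed

lemma subspace_line: "subspace (line smul a)"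
  unfolding subspace_def line_def
proof (intro conjI ballI allI)
  show "0 \<in> range (\<lambda>c. smul c a)"
    by (rule range_eqI[of _ _ 0]) simp
next
  fix x y assume "x \<in> range (\<lambda>c. smul c a)" "y \<in> range (\<lambda>c. smul c a)"
  then obtain c d where "x = smul c a" "y = smul d a" by auto
  then show "x + y \<in> range (\<lambda>c. smul c a)"
    by (intro range_eqI[of _ _ "c + d"]) (simp add: scale_left_distrib)
next
  fix k x assume "x \<in> range (\<lambda>c. smul c a)"
  then obtain c where "x = smul c a" by auto
  then show "smul k x \<in> range (\<lambda>c. smul c a)"
    by (intro range_eqI[of _ _ "k * c"]) simp
qed

lemma scale_mem_line: "smul c a \<in> line smul a"
  unfolding line_def by auto

lemma self_mem_line: "a \<in> line smul a"
  using scale_mem_line[of 1 a] by simp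

lemma mem_lineE:
  assumes "x \<in> line smul a"
  obtains c where "x = smul c a"
  using assms unfolding line_def by auto

lemma mult_mem_line_left:
  assumes "c * a \<in> line smul a" and "x \<in> line smul a"
  shows "c * x \<in> line smul a"
  using assms(2) by (elim mem_lineE) (metis scale_mult_right subspace_scale subspace_line assms(1))

lemma mult_mem_line_right:
  assumes "a * c \<in> line smul a" and "x \<in> line smul a"
  shows "x * c \<in> line smul a"
  using assms(2) by (elim mem_lineE) (metis scale_mult_left subspace_scale subspace_line assms(1))

lemma ideal_line_iff:
  "ideal \<theta> smul (line smul a) \<longleftrightarrow>
     (\<theta> \<noteq> Right \<longrightarrow> (\<forall>c. c * a \<in> line smul a)) \<and> (\<theta> \<noteq> Left \<longrightarrow> (\<forall>c. a * c \<in> line smul a))"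
proof -
  have "(\<forall>x\<in>line smul a. \<forall>c. c * x \<in> line smul a) \<longleftrightarrow> (\<forall>c. c * a \<in> line smul a)"
    using self_mem_line mult_mem_line_left by blast
  moreover have "(\<forall>x\<in>line smul a. \<forall>c. x * c \<in> line smul a) \<longleftrightarrow> (\<forall>c. a * c \<in> line smul a)"
    using self_mem_line mult_mem_line_right by blast
  ultimately show ?thesis
    using subspace_line by (cases \<theta>) (simp_all add: ball_conj_distrib all_conj_distrib)
qed

lemma square_eq_zero_if_not_quasi_idempotent:
  assumes "\<not> quasi_idempotent smul a"
    and "b \<in> line smul a" and "b * b \<in> line smul a"
  shows "b * b = 0"
proof -
  obtain s where b: "b = smul s a"
    using assms(2) by (rule mem_lineE)
  obtain t where "b * b = smul t a"
    using assms(3) by (rule mem_lineE)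
  then have st: "smul (s * s) (a * a) = smul t a"
    by (simp add: b scale_mult_scale)
  show ?thesis
  proof (cases "s = 0")
    case False
    then have "inverse (s * s) * (s * s) = 1"
      by (intro left_inverse) simp
    then have "a * a = smul (inverse (s * s)) (smul (s * s) (a * a))"
      by (simp only: scale_scale scale_one)
    also have "\<dots> = smul (inverse (s * s) * t) a"
      by (simp only: st scale_scale)
    finally have "a * a = 0"
      using assms(1) unfolding quasi_idempotent_def by (metis scale_zero_left)
    then show ?thesis
      by (simp add: b scale_mult_scale)
  qed (simp add: b)
qed

lemma quasi_idempotent_scaled_idempotent:
  assumes "quasi_idempotent smul a"
  obtains r e where "e \<in> line smul a" and "e * e = e" and "a = smul r e"
proof -
  obtain r where "r \<noteq> 0" and aa: "a * a = smul r a"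
    using assms unfolding quasi_idempotent_def by blast
  define e where "e = smul (inverse r) a"
  have "e * e = smul (inverse r * inverse r * r) a"
    unfolding e_def scale_mult_scale aa scale_scale ..
  also have "\<dots> = e"
    unfolding e_def using \<open>r \<noteq> 0\<close> by (simp add: mult.assoc)
  finally have "e * e = e" .
  moreover have "a = smul r e"
    unfolding e_def using \<open>r \<noteq> 0\<close> by simp
  ultimately show ?thesis
    using that scale_mem_line unfolding e_def by blast
qed

lemma ideal_if_mathieu_line_quasi_idempotent:
  assumes "mathieu \<theta> smul (line smul a)" and "quasi_idempotent smul a"
  shows "ideal \<theta> smul (line smul a)"
proof -
  obtain r e where e: "e \<in> line smul a" "e * e = e" and a: "a = smul r e"
    using assms(2) by (rule quasi_idempotent_scaled_idempotent)
  have "\<theta> \<noteq> Right \<Longrightarrow> c * a \<in> line smul a" for c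
    using mathieu_absorbs_idempotent(1)[OF assms(1) e]
    by (metis a scale_mult_right subspace_scale subspace_line)
  moreover have "\<theta> \<noteq> Left \<Longrightarrow> a * c \<in> line smul a" for c
    using mathieu_absorbs_idempotent(2)[OF assms(1) e]
    by (metis a scale_mult_left subspace_scale subspace_line)
  ultimately show ?thesis
    unfolding ideal_line_iff by blast
qed

lemma mathieu_line_iff:
  "mathieu \<theta> smul (line smul a) \<longleftrightarrow>
     ideal \<theta> smul (line smul a) \<or> \<not> quasi_idempotent smul a"
proof
  assume "mathieu \<theta> smul (line smul a)"
  then show "ideal \<theta> smul (line smul a) \<or> \<not> quasi_idempotent smul a"
    using ideal_if_mathieu_line_quasi_idempotent by blast
next
  assume "ideal \<theta> smul (line smul a) \<or> \<not> quasi_idempotent smul a"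
  then show "mathieu \<theta> smul (line smul a)"
  proof
    assume "\<not> quasi_idempotent smul a"
    show ?thesis
    proof (rule mathieu_if_powers_nilpotent[OF subspace_line])
      fix b assume powers: "\<forall>m\<ge>1. b ^ m \<in> line smul a"
      then have "b ^ 1 \<in> line smul a" "b ^ 2 \<in> line smul a"
        by (simp_all only: one_le_numeral order.refl)
      then show "b * b = 0"
        using square_eq_zero_if_not_quasi_idempotent[OF \<open>\<not> quasi_idempotent smul a\<close>]
        by (simp add: power2_eq_square)
    qed
  qed (rule mathieu_if_ideal)
qed

lemma line_subset_gen: "line smul a \<subseteq> gen \<theta> smul a"
proof
  fix x assume "x \<in> line smul a"
  then obtain k where x: "x = smul k a"
    by (rule mem_lineE)
  have "x = smul k 1 * a" "x = a * smul k 1" "x = a * smul k 1 + 0 * a"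
    using scale_mult_left[of k 1 a] scale_mult_right[of k a 1] by (simp_all add: x)
  then have one_sided: "x \<in> gen Left smul a" "x \<in> gen Right smul a" "x \<in> gen PreTwoSided smul a"
    unfolding gen.simps by blast+
  have two_sided: "x \<in> gen TwoSided smul a"
    unfolding gen.simps
  proof (rule InterI)
    fix I assume "I \<in> {I. ideal TwoSided smul I \<and> a \<in> I}"
    then have "subspace I" "a \<in> I"
      by simp_all
    then show "x \<in> I"
      unfolding x by (rule subspace_scale)
  qed
  show "x \<in> gen \<theta> smul a"
    using one_sided two_sided by (cases \<theta>) auto
qed

lemma ideal_gen_two_sided: "ideal TwoSided smul (gen TwoSided smul a)"
proof -
  let ?F = "{I. ideal TwoSided smul I \<and> a \<in> I}"
  have "subspace (\<Inter>?F)"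
    by (rule subspace_Inter) (use ideal.simps(4) in blast)
  moreover have "\<forall>x\<in>\<Inter>?F. \<forall>c. c * x \<in> \<Inter>?F \<and> x * c \<in> \<Inter>?F"
    by auto
  ultimately have "ideal TwoSided smul (\<Inter>?F)"
    using ideal.simps(4)[of smul "\<Inter>?F"] by blast
  then show ?thesis
    by (simp only: gen.simps)
qed

lemma ideal_line_iff_gen_subset: "ideal \<theta> smul (line smul a) \<longleftrightarrow> gen \<theta> smul a \<subseteq> line smul a"
proof (cases \<theta>)
  case PreTwoSided
  have "{a * c + d * a |c d. True} \<subseteq> line smul a \<longleftrightarrow>
      (\<forall>c. c * a \<in> line smul a) \<and> (\<forall>c. a * c \<in> line smul a)"
  proof
    assume sums: "{a * c + d * a |c d. True} \<subseteq> line smul a"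
    have "a * 0 + c * a \<in> line smul a" "a * c + 0 * a \<in> line smul a" for c
      using sums by blast+
    then show "(\<forall>c. c * a \<in> line smul a) \<and> (\<forall>c. a * c \<in> line smul a)"
      by simp
  next
    assume "(\<forall>c. c * a \<in> line smul a) \<and> (\<forall>c. a * c \<in> line smul a)"
    then show "{a * c + d * a |c d. True} \<subseteq> line smul a"
      using subspace_add[OF subspace_line] by blast
  qed
  then show ?thesis
    unfolding ideal_line_iff by (simp add: PreTwoSided)
next
  case TwoSided
  have "gen TwoSided smul a \<subseteq> line smul a" if "ideal TwoSided smul (line smul a)"
    unfolding gen.simps by (intro Inter_lower CollectI conjI that self_mem_line)
  moreover have "ideal TwoSided smul (line smul a)" if "gen TwoSided smul a \<subseteq> line smul a"
  proof -
    have "line smul a = gen TwoSided smul a"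
      using line_subset_gen that by (rule subset_antisym)
    then show ?thesis
      using ideal_gen_two_sided[of a] by (simp only:)
  qed
  ultimately show ?thesis
    unfolding TwoSided by (rule iffI)
next
  case Left
  have "(\<forall>c. c * a \<in> line smul a) \<longleftrightarrow> {c * a |c. True} \<subseteq> line smul a"
    by blast
  then show ?thesis
    unfolding Left ideal_line_iff gen.simps by simp
next
  case Right
  have "(\<forall>c. a * c \<in> line smul a) \<longleftrightarrow> {a * c |c. True} \<subseteq> line smul a"
    by blast
  then show ?thesis
    unfolding Right ideal_line_iff gen.simps by simp
qed

lemma ideal_line_iff_line_eq_gen: "ideal \<theta> smul (line smul a) \<longleftrightarrow> line smul a = gen \<theta> smul a"
  using ideal_line_iff_gen_subset line_subset_gen[of a \<theta>] by blast

end

theorem proposition4p8: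
  fixes smul :: "'k::field \<Rightarrow> 'a::ring_1 \<Rightarrow> 'a"
    and \<theta> :: mtype and a :: 'a
  assumes "is_algebra smul"
    and "a \<noteq> 0"
  shows "(mathieu \<theta> smul (line smul a) \<longleftrightarrow>
            (ideal \<theta> smul (line smul a) \<or> \<not> quasi_idempotent smul a))
         \<and> (ideal \<theta> smul (line smul a) \<longleftrightarrow> line smul a = gen \<theta> smul a)"
proof -
  interpret k_algebra smul
    using assms(1) by unfold_locales
  show ?thesis
    using mathieu_line_iff ideal_line_iff_line_eq_gen by blast
qed

end
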